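(* Let $\operatorname{R}_4=\{a_0,a_1,a_2,a_3\}$ be the dihedral quandle of order $4$, with $a_ia_j=a_{2j-i \pmod 4}$. Then the quandle ring $\mathbb{Z}[\operatorname{R}_4]$ contains a unique maximal quandle, namely $$M=\Big\{t\big(a_0+\alpha(a_2-a_0)\big)+(1-t)\big(a_1+\beta(a_3-a_1)\big)~|~t\in\{0,1\},~\alpha,\beta\in\mathbb{Z}\Big\}.$$
   Context: A quandle is a non-empty set with a binary operation $(x,y)\mapsto xy$ such that $xx=x$; for all $x,y$ there is a unique $z$ with $x=zy$; and $(xy)z=(xz)(yz)$. For a quandle $Q$, the quandle ring $\mathbb{Z}[Q]$ is the free abelian group with basis $Q$, with multiplication $\big(\sum_i\alpha_i q_i\big)\big(\sum_j\beta_j q_j\big)=\sum_{i,j}\alpha_i\beta_j (q_iq_j)$. A quandle in $\mathbb{Z}[Q]$ is a subset closed under the ring multiplication which is a quandle under the restricted multiplication; a maximal quandle is a non-zero quandle in $\mathbb{Z}[Q]$ (i.e. not equal to $\{0\}$) not properly contained in any other quandle in $\mathbb{Z}[Q]$. *)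

theory Defs
  imports Main "HOL-Library.Numeral_Type"
begin

definition is_quandle_in :: "('a \<Rightarrow> 'a \<Rightarrow> 'a) \<Rightarrow> 'a set \<Rightarrow> bool" where
  "is_quandle_in op Q \<longleftrightarrow>
     Q \<noteq> {} \<and>
     (\<forall>x\<in>Q. \<forall>y\<in>Q. op x y \<in> Q) \<and>
     (\<forall>x\<in>Q. op x x = x) \<and>
     (\<forall>x\<in>Q. \<forall>y\<in>Q. \<exists>!z. z \<in> Q \<and> x = op z y) \<and>
     (\<forall>x\<in>Q. \<forall>y\<in>Q. \<forall>z\<in>Q. op (op x y) z = op (op x z) (op y z))"

definition r4_op :: "4 \<Rightarrow> 4 \<Rightarrow> 4" where
  "r4_op i j = 2 * j - i"

text \<open>The quandle ring Z[R_4]: free abelian group with basis R_4, i.e. functions 4 \<Rightarrow> int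
  (coefficient of each basis element), with bilinear extension of the quandle operation.\<close>
type_synonym zr4 = "4 \<Rightarrow> int"

definition zr4_mult :: "zr4 \<Rightarrow> zr4 \<Rightarrow> zr4" where
  "zr4_mult f g = (\<lambda>k. \<Sum>i\<in>UNIV. \<Sum>j\<in>UNIV. if r4_op i j = k then f i * g j else 0)"

definition bas :: "4 \<Rightarrow> zr4" where
  "bas i = (\<lambda>k. if k = i then 1 else 0)"

definition maximal_quandle_zr4 :: "zr4 set \<Rightarrow> bool" where
  "maximal_quandle_zr4 Q \<longleftrightarrow>
     is_quandle_in zr4_mult Q \<and> Q \<noteq> {(\<lambda>_. 0)} \<and>
     \<not> (\<exists>Q'. is_quandle_in zr4_mult Q' \<and> Q \<subset> Q')"

end

theory Submission
  imports Defs
begin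

text \<open>Right multiplication by \<open>y\<close> depends only on the parity sums \<open>e(y) = y\<^sub>0 + y\<^sub>2\<close>
  and \<open>o(y) = y\<^sub>1 + y\<^sub>3\<close>: it is \<open>e(y)\<close> times right multiplication by \<open>a\<^sub>0\<close> plus \<open>o(y)\<close>
  times right multiplication by \<open>a\<^sub>1\<close>. Comparing parity sums in \<open>x x = x\<close> shows that a
  non-zero idempotent has \<open>e(x) + o(x) = 1\<close>. If \<open>e(x)\<close> and \<open>o(x)\<close> were both non-zero, the
  equations \<open>x x = x\<close> would force \<open>x\<^sub>0 = x\<^sub>2\<close> and \<open>x\<^sub>1 = x\<^sub>3\<close>, making \<open>e(x) + o(x)\<close> even;
  so one of them vanishes, which puts \<open>x\<close> on one of the lines \<open>a\<^sub>0 + \<alpha>(a\<^sub>2 - a\<^sub>0)\<close> or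
  \<open>a\<^sub>1 + \<beta>(a\<^sub>3 - a\<^sub>1)\<close>. Their union \<open>M\<close> is an involutory quandle. Since \<open>0\<close> is right
  absorbing, the only quandle containing \<open>0\<close> is \<open>{0}\<close>; every other quandle consists of
  non-zero idempotents and so lies in \<open>M\<close>, making \<open>M\<close> the unique maximal quandle.\<close>

lemma unique_maximal_if_greatest:
  assumes "P M" and "\<not> M \<subseteq> Z"
    and "\<And>Q. P Q \<Longrightarrow> Q \<noteq> Z \<Longrightarrow> Q \<subseteq> M"
  shows "(P Q \<and> Q \<noteq> Z \<and> \<not> (\<exists>Q'. P Q' \<and> Q \<subset> Q')) \<longleftrightarrow> Q = M"
  using assms by blast

lemma is_quandle_in_involutory:
  assumes "Q \<noteq> {}"
    and closed: "\<And>x y. x \<in> Q \<Longrightarrow> y \<in> Q \<Longrightarrow> op x y \<in> Q"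
    and idem: "\<And>x. x \<in> Q \<Longrightarrow> op x x = x"
    and invol: "\<And>x y. x \<in> Q \<Longrightarrow> y \<in> Q \<Longrightarrow> op (op x y) y = x"
    and distrib: "\<And>x y z. x \<in> Q \<Longrightarrow> y \<in> Q \<Longrightarrow> z \<in> Q \<Longrightarrow>
                    op (op x y) z = op (op x z) (op y z)"
  shows "is_quandle_in op Q"
  unfolding is_quandle_in_def
proof (intro conjI ballI)
  fix x y assume "x \<in> Q" "y \<in> Q"
  show "\<exists>!z. z \<in> Q \<and> x = op z y"
  proof (rule ex1I[of _ "op x y"])
    show "op x y \<in> Q \<and> x = op (op x y) y"
      using \<open>x \<in> Q\<close> \<open>y \<in> Q\<close> closed invol by simp
    show "w = op x y" if "w \<in> Q \<and> x = op w y" for w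
      using that \<open>y \<in> Q\<close> invol by auto
  qed
qed (fact assms(1) | (rule closed idem distrib; assumption))+

lemma is_quandle_in_idem: "is_quandle_in op Q \<Longrightarrow> x \<in> Q \<Longrightarrow> op x x = x"
  unfolding is_quandle_in_def by blast

lemma is_quandle_in_right_divisible:
  "is_quandle_in op Q \<Longrightarrow> x \<in> Q \<Longrightarrow> y \<in> Q \<Longrightarrow> \<exists>z\<in>Q. x = op z y"
  unfolding is_quandle_in_def by metis

lemma is_quandle_in_right_absorbing:
  assumes "is_quandle_in op Q" and "z \<in> Q" and "\<And>x. op x z = z"
  shows "Q = {z}"
proof -
  have "x = z" if "x \<in> Q" for x
    using is_quandle_in_right_divisible[OF assms(1) that assms(2)] assms(3) by auto
  with assms(2) show ?thesis by blast
qed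

lemma UNIV_4: "(UNIV :: 4 set) = {0, 1, 2, 3}"
proof -
  have "x \<in> {0, 1, 2, 3}" for x :: 4
  proof (induct x)
    case (of_int z)
    then have "z = 0 \<or> z = 1 \<or> z = 2 \<or> z = 3" by auto
    then show ?case by auto
  qed
  then show ?thesis by auto
qed

lemma zr4_eq_iff: "(x :: zr4) = y \<longleftrightarrow> x 0 = y 0 \<and> x 1 = y 1 \<and> x 2 = y 2 \<and> x 3 = y 3"
proof -
  have "(\<forall>k. x k = y k) \<longleftrightarrow> (\<forall>k\<in>{0, 1, 2, 3}. x k = y k)" using UNIV_4 by blast
  then show ?thesis by (simp add: fun_eq_iff)
qed

lemma zr4_mult_apply:
  "zr4_mult x y 0 = (y 0 + y 2) * x 0 + (y 1 + y 3) * x 2"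
  "zr4_mult x y 1 = (y 0 + y 2) * x 3 + (y 1 + y 3) * x 1"
  "zr4_mult x y 2 = (y 0 + y 2) * x 2 + (y 1 + y 3) * x 0"
  "zr4_mult x y 3 = (y 0 + y 2) * x 1 + (y 1 + y 3) * x 3"
  unfolding zr4_mult_def r4_op_def UNIV_4 by (simp_all add: algebra_simps)

lemma zr4_mult_zero_right: "zr4_mult x (\<lambda>_. 0) = (\<lambda>_. 0)"
  by (simp add: zr4_eq_iff zr4_mult_apply)

definition line02 :: "int \<Rightarrow> zr4" where
  "line02 \<alpha> = (\<lambda>k. if k = 0 then 1 - \<alpha> else if k = 2 then \<alpha> else 0)"

definition line13 :: "int \<Rightarrow> zr4" where
  "line13 \<beta> = (\<lambda>k. if k = 1 then 1 - \<beta> else if k = 3 then \<beta> else 0)"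

lemma line02_apply [simp]:
  "line02 \<alpha> 0 = 1 - \<alpha>" "line02 \<alpha> 1 = 0" "line02 \<alpha> 2 = \<alpha>" "line02 \<alpha> 3 = 0"
  by (simp_all add: line02_def)

lemma line13_apply [simp]:
  "line13 \<beta> 0 = 0" "line13 \<beta> 1 = 1 - \<beta>" "line13 \<beta> 2 = 0" "line13 \<beta> 3 = \<beta>"
  by (simp_all add: line13_def)

lemma zr4_mult_lines [simp]:
  "zr4_mult (line02 \<alpha>) (line02 \<alpha>') = line02 \<alpha>"
  "zr4_mult (line02 \<alpha>) (line13 \<beta>') = line02 (1 - \<alpha>)"
  "zr4_mult (line13 \<beta>) (line02 \<alpha>') = line13 (1 - \<beta>)"
  "zr4_mult (line13 \<beta>) (line13 \<beta>') = line13 \<beta>"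
  by (simp_all add: zr4_eq_iff zr4_mult_apply)

definition lines_R4 :: "zr4 set" where
  "lines_R4 = range line02 \<union> range line13"

lemma is_quandle_in_lines_R4: "is_quandle_in zr4_mult lines_R4"
  by (rule is_quandle_in_involutory) (auto simp: lines_R4_def)

lemma lines_R4_not_subset_zero: "\<not> lines_R4 \<subseteq> {\<lambda>_. 0}"
proof -
  have "line02 0 \<in> lines_R4" "line02 0 \<noteq> (\<lambda>_. 0)"
    by (auto simp: lines_R4_def zr4_eq_iff)
  then show ?thesis by blast
qed

lemma zr4_idempotent_augmentation:
  assumes "zr4_mult x x = x" and "x \<noteq> (\<lambda>_. 0)"
  shows "(x 0 + x 2) + (x 1 + x 3) = 1"
proof (rule ccontr)
  let ?ev = "x 0 + x 2" and ?od = "x 1 + x 3"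
  assume "?ev + ?od \<noteq> 1"
  have "?ev * (?ev + ?od) = ?ev" "?od * (?ev + ?od) = ?od"
    using assms(1) zr4_mult_apply[of x x] by (simp_all add: zr4_eq_iff algebra_simps)
  with \<open>?ev + ?od \<noteq> 1\<close> have "?ev = 0" "?od = 0" by auto
  then have "x = (\<lambda>_. 0)"
    using assms(1) zr4_mult_apply[of x x] by (simp add: zr4_eq_iff)
  with assms(2) show False ..
qed

lemma idempotent_in_lines_R4:
  assumes idem: "zr4_mult x x = x" and "x \<noteq> (\<lambda>_. 0)"
  shows "x \<in> lines_R4"
proof -
  define ev od where "ev = x 0 + x 2" and "od = x 1 + x 3"
  have "ev + od = 1" using zr4_idempotent_augmentation assms unfolding ev_def od_def by blast
  have fix0: "x 0 = ev * x 0 + od * x 2" and fix1: "x 1 = ev * x 3 + od * x 1"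
    using idem zr4_mult_apply[of x x] unfolding ev_def od_def by (simp_all add: zr4_eq_iff)
  have "od * (x 2 - x 0) = (ev * x 0 + od * x 2) - (ev + od) * x 0"
    by (simp add: algebra_simps)
  with fix0 \<open>ev + od = 1\<close> have od_even: "od * (x 2 - x 0) = 0" by simp
  have "ev * (x 3 - x 1) = (ev * x 3 + od * x 1) - (ev + od) * x 1"
    by (simp add: algebra_simps)
  with fix1 \<open>ev + od = 1\<close> have ev_odd: "ev * (x 3 - x 1) = 0" by simp
  have "od = 0 \<or> ev = 0"
  proof (rule ccontr)
    assume "\<not> (od = 0 \<or> ev = 0)"
    with od_even ev_odd have "x 2 = x 0" "x 3 = x 1" by auto
    with \<open>ev + od = 1\<close> have "2 * (x 0 + x 1) = 1" unfolding ev_def od_def by simp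
    then show False by presburger
  qed
  then show ?thesis
  proof
    assume "od = 0"
    with ev_odd \<open>ev + od = 1\<close> have "x 1 = 0" "x 3 = 0" "x 0 = 1 - x 2"
      unfolding ev_def od_def by auto
    then have "x = line02 (x 2)" by (simp add: zr4_eq_iff)
    then show ?thesis by (simp add: lines_R4_def)
  next
    assume "ev = 0"
    with od_even \<open>ev + od = 1\<close> have "x 0 = 0" "x 2 = 0" "x 1 = 1 - x 3"
      unfolding ev_def od_def by auto
    then have "x = line13 (x 3)" by (simp add: zr4_eq_iff)
    then show ?thesis by (simp add: lines_R4_def)
  qed
qed

lemma quandle_subset_lines_R4:
  assumes Q: "is_quandle_in zr4_mult Q" and "Q \<noteq> {\<lambda>_. 0}"
  shows "Q \<subseteq> lines_R4"
proof
  fix x assume "x \<in> Q"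
  have "(\<lambda>_. 0) \<notin> Q"
    using is_quandle_in_right_absorbing[OF Q _ zr4_mult_zero_right] \<open>Q \<noteq> {\<lambda>_. 0}\<close> by blast
  with \<open>x \<in> Q\<close> have "x \<noteq> (\<lambda>_. 0)" by blast
  with is_quandle_in_idem[OF Q \<open>x \<in> Q\<close>] show "x \<in> lines_R4"
    by (rule idempotent_in_lines_R4)
qed

lemma lines_R4_eq:
  "{\<lambda>k. t * (bas 0 k + \<alpha> * (bas 2 k - bas 0 k))
        + (1 - t) * (bas 1 k + \<beta> * (bas 3 k - bas 1 k)) |
    t \<alpha> \<beta>. t \<in> {0, 1::int}} = lines_R4" (is "?S = _")
proof -
  let ?f = "\<lambda>t \<alpha> \<beta> k. t * (bas 0 k + \<alpha> * (bas 2 k - bas 0 k))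
                 + (1 - t) * (bas 1 k + \<beta> * (bas 3 k - bas 1 k))"
  have lines: "line02 \<alpha> = ?f 1 \<alpha> \<beta>" "line13 \<beta> = ?f 0 \<alpha> \<beta>" for \<alpha> \<beta> :: int
    by (simp_all add: zr4_eq_iff bas_def)
  show ?thesis
  proof (intro equalityI subsetI)
    fix x assume "x \<in> ?S"
    then obtain t \<alpha> \<beta> where "t = 1 \<or> t = 0" "x = ?f t \<alpha> \<beta>" by blast
    with lines show "x \<in> lines_R4" unfolding lines_R4_def by auto
  next
    fix x assume "x \<in> lines_R4"
    with lines show "x \<in> ?S" unfolding lines_R4_def by blast
  qed
qed

theorem theorem5p3:
  "\<forall>Q. maximal_quandle_zr4 Q \<longleftrightarrow>
     Q = {\<lambda>k. t * (bas 0 k + \<alpha> * (bas 2 k - bas 0 k))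
              + (1 - t) * (bas 1 k + \<beta> * (bas 3 k - bas 1 k)) |
          t \<alpha> \<beta>. t \<in> {0, 1::int}}"
  unfolding lines_R4_eq maximal_quandle_zr4_def
  using unique_maximal_if_greatest[of "is_quandle_in zr4_mult", OF is_quandle_in_lines_R4
      lines_R4_not_subset_zero]
    quandle_subset_lines_R4
  by blast

end
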